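(* Let $\mu_1,\mu_2>0$ with $\mu_1+\mu_2=1$ and $\mu_1\le\mu_2$. Put $$e=\frac{\sqrt{(\mu_1/\mu_2)^4+8(\mu_1/\mu_2)^2}-(\mu_1/\mu_2)^2}{4},\qquad \sigma=\sigma(\mu_1,\mu_2)=-\frac{(1-e^2)(\mu_1^2+\mu_2^2e)^2}{2\mu_2e^2}.$$ Consider the planar orbital dynamics described in the context, started from two intersecting elliptic co-focal Keplerian orbits $o_1,o_2$ with $E<0$. If initially $EL^2<\sigma$, then for every possible evolution (every choice of collision points, impact directions $\mathbf n$ and number of collisions) the orbits remain elliptic for all times. Moreover, along every evolution $|L_1|$ and $|L_2|$ stay bounded and $e_i\le c_i<1$ ($i=1,2$) for suitable constants $c_1,c_2$.
   Context: Units are chosen so that a particle at position $\mathbf x\in\mathbb R^2\setminus\{0\}$ undergoes Keplerian motion about the origin with acceleration $-\mathbf x/|\mathbf x|^3$. For a particle $i$ at position $\mathbf x_i$ with velocity $\mathbf v_i$, its specific energy is $E_i=|\mathbf v_i|^2/2-1/|\mathbf x_i|$, its (signed) specific angular momentum is $L_i=x_{i,1}v_{i,2}-x_{i,2}v_{i,1}$, and its eccentricity is $e_i=\sqrt{1+2E_iL_i^2}$; these are constant along the Keplerian orbit $o_i$ determined by $(\mathbf x_i,\mathbf v_i)$, which is elliptic iff $E_i<0$. Two point particles have masses $m_1,m_2$, $M=m_1+m_2$, $\mu_i=m_i/M$. Set $E=\mu_1E_1+\mu_2E_2$ and $L=\mu_1L_1+\mu_2L_2$. Orbital dynamics: the state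 is a pair of coplanar Keplerian orbits $o_1,o_2$ with common focus at the origin that intersect. One step: choose a point $\mathbf x$ of $o_1\cap o_2$; let $\mathbf v_1,\mathbf v_2$ be the velocities of particles moving on $o_1,o_2$ when at $\mathbf x$; choose a unit vector $\mathbf n$ with $\mathbf n\cdot\mathbf w<0$ where $\mathbf w=\mathbf v_1-\mathbf v_2$; set $\mathbf w'=(I-\mathbf n\otimes\mathbf n)\mathbf w-(1-2\varepsilon)(\mathbf n\otimes\mathbf n)\mathbf w$ with inelasticity parameter $\varepsilon\in[0,1/2]$ ($\varepsilon=0$: elastic collision), where $(\mathbf n\otimes\mathbf n)\mathbf w=(\mathbf n\cdot\mathbf w)\mathbf n$; with $\mathbf v=\mu_1\mathbf v_1+\mu_2\mathbf v_2$ set $\mathbf v_1'=\mathbf v+\mu_2\mathbf w'$, $\mathbf v_2'=\mathbf v-\mu_1\mathbf w'$. The new orbits $o_1',o_2'$ are the Keplerian orbits through $\mathbf x$ with velocities $\mathbf v_1',\mathbf v_2'$. Steps are iterated arbitrarily. The total $L$ is conserved and $E$ does not increase at each step. *)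

theory Defs
  imports "HOL-Analysis.Analysis"
begin

definition kep_energy :: "real^2 \<Rightarrow> real^2 \<Rightarrow> real" where
  "kep_energy x v = (norm v)^2 / 2 - 1 / norm x"

definition kep_angmom :: "real^2 \<Rightarrow> real^2 \<Rightarrow> real" where
  "kep_angmom x v = x$1 * v$2 - x$2 * v$1"

definition kep_ecc :: "real^2 \<Rightarrow> real^2 \<Rightarrow> real" where
  "kep_ecc x v = sqrt (1 + 2 * kep_energy x v * (kep_angmom x v)^2)"

text \<open>Laplace--Runge--Lenz vector (planar form of v \<times> L - x/|x|).\<close>
definition kep_lrl :: "real^2 \<Rightarrow> real^2 \<Rightarrow> real^2" where
  "kep_lrl x v = ((norm v)^2 - 1 / norm x) *\<^sub>R x - (x \<bullet> v) *\<^sub>R v"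

text \<open>The Keplerian orbit determined by (x,v), as the set of phase states
  (position, velocity) of a particle moving along it: the states sharing the
  conserved quantities energy, angular momentum and Laplace--Runge--Lenz vector.\<close>
definition kep_orbit :: "real^2 \<Rightarrow> real^2 \<Rightarrow> ((real^2) \<times> (real^2)) set" where
  "kep_orbit x v = {(y, w). y \<noteq> 0 \<and> kep_energy y w = kep_energy x v
      \<and> kep_angmom y w = kep_angmom x v \<and> kep_lrl y w = kep_lrl x v}"

text \<open>One collision step of the orbital dynamics, with mass fractions mu1, mu2
  and inelasticity parameter eps.\<close>
definition orb_step :: "real \<Rightarrow> real \<Rightarrow> real \<Rightarrow>
    (((real^2) \<times> (real^2)) set \<times> ((real^2) \<times> (real^2)) set) \<Rightarrow>
    (((real^2) \<times> (real^2)) set \<times> ((real^2) \<times> (real^2)) set) \<Rightarrow> bool" where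
  "orb_step mu1 mu2 eps S S' \<longleftrightarrow>
     (\<exists>x v1 v2 n. (x, v1) \<in> fst S \<and> (x, v2) \<in> snd S \<and> norm n = 1 \<and>
        n \<bullet> (v1 - v2) < 0 \<and>
        (let w = v1 - v2;
             w' = (w - (n \<bullet> w) *\<^sub>R n) - (1 - 2 * eps) *\<^sub>R ((n \<bullet> w) *\<^sub>R n);
             v = mu1 *\<^sub>R v1 + mu2 *\<^sub>R v2
         in S' = (kep_orbit x (v + mu2 *\<^sub>R w'), kep_orbit x (v - mu1 *\<^sub>R w'))))"

end

theory Submission
  imports Defs
begin

text \<open>At a common collision point x, with r = |x|, put P_i = |v_i|^2 r and
  b_i = L_i / sqrt r. Then E_i L_i^2 = (P_i/2 - 1) b_i^2 with b_i^2 \<le> P_i, and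
  E L^2 = -D M^2 with D = 1 - (\<mu>_1 P_1 + \<mu>_2 P_2)/2 and M = \<mu>_1 b_1 + \<mu>_2 b_2.
  Collisions keep L and do not increase E, so E L^2 \<le> \<sigma> - g with g > 0 holds
  along every evolution. Now -\<sigma> bounds D M^2 both on states in which one particle
  is unbound (P_i \<ge> 2), by a weighted Cauchy--Schwarz estimate whose optimal weight
  is y = e \<mu>_2 / \<mu>_1, and on radial states (b_i = 0). A margin g above both
  forces E_i L_i^2 \<le> -\<delta>(g) < 0, which keeps the eccentricities below
  sqrt (1 - 2\<delta>); and E \<ge> -1/r turns E L^2 \<le> \<sigma> - g into r \<le> L^2/(g - \<sigma>),
  which bounds L_i^2 \<le> 2r for bound particles.\<close>

definition escape_bound :: "real \<Rightarrow> real \<Rightarrow> real \<Rightarrow> real" where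
  "escape_bound a b y = (a/y + b) * (b + y*a)^2 / 2"

definition binding_margin :: "real \<Rightarrow> real" where
  "binding_margin g = g/4 * (min 1 (g/10))^2"

lemma binding_margin_pos: "g > 0 \<Longrightarrow> binding_margin g > 0"
  by (simp add: binding_margin_def)

lemma escape_bound_nonneg: "a \<ge> 0 \<Longrightarrow> b \<ge> 0 \<Longrightarrow> y > 0 \<Longrightarrow> escape_bound a b y \<ge> 0"
  by (simp add: escape_bound_def)

lemma escape_bound_alt: "y \<noteq> 0 \<Longrightarrow> escape_bound a b y = (a + b*y) * (b + a*y)^2 / (2*y)"
  by (simp add: escape_bound_def field_simps power2_eq_square)

lemma weighted_sq_le:
  fixes a b b1 b2 P1 P2 :: real
  assumes "a \<ge> 0" "b \<ge> 0" "a + b = 1" "b1^2 \<le> P1" "b2^2 \<le> P2"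
  shows "(a*b1 + b*b2)^2 \<le> a*P1 + b*P2"
proof -
  have b: "b = 1 - a" using assms(3) by simp
  have "(a*b1 + b*b2)^2 = a*b1^2 + b*b2^2 - a*b*(b1-b2)^2"
    unfolding b by (simp add: algebra_simps power2_eq_square)
  moreover have "a*b*(b1-b2)^2 \<ge> 0" "a*b1^2 \<le> a*P1" "b*b2^2 \<le> b*P2"
    using assms by (auto intro: mult_left_mono)
  ultimately show ?thesis by linarith
qed

lemma radial_product_le:
  fixes a b P1 P2 b2 :: real
  assumes "a > 0" "b > 0" "b2^2 \<le> P2" "P1 \<ge> 0" "1 - (a*P1 + b*P2)/2 > 0"
  shows "(1 - (a*P1 + b*P2)/2) * (b*b2)^2 \<le> b/2"
proof -
  define D where "D = 1 - (a*P1 + b*P2)/2"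
  define t where "t = b*b2^2"
  have t0: "t \<ge> 0" using assms unfolding t_def by simp
  have "a*P1 \<ge> 0" "b*P2 \<ge> t" unfolding t_def using assms by (simp_all add: mult_left_mono)
  then have D_le: "D \<le> 1 - t/2" unfolding D_def by simp
  have "D * (b*b2)^2 = D * (b*t)" unfolding t_def by (simp add: power2_eq_square)
  also have "\<dots> \<le> (1 - t/2) * (b*t)" using D_le t0 assms by (intro mult_right_mono) auto
  also have "\<dots> = b * ((1 - t/2)*t)" by simp
  also have "\<dots> \<le> b * (1/2)"
  proof -
    have "(1 - t/2)*t \<le> 1/2" using sum_squares_ge_zero[of "t-1" 0]
      by (simp add: algebra_simps power2_eq_square)
    then show ?thesis using assms by (intro mult_left_mono) auto
  qed
  finally show ?thesis unfolding D_def by simp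
qed

lemma escape_product_le:
  fixes a b P1 P2 b1 b2 y :: real
  assumes ab: "a > 0" "b > 0" "a + b = 1" and y: "0 < y" "y \<le> 1"
    and P: "b1^2 \<le> P1" "b2^2 \<le> P2" and unbound: "P1 \<ge> 2"
    and D_pos: "1 - (a*P1 + b*P2)/2 > 0"
  shows "(1 - (a*P1 + b*P2)/2) * (a*b1 + b*b2)^2 \<le> escape_bound a b y"
proof -
  define D where "D = 1 - (a*P1 + b*P2)/2"
  define X where "X = a*P1"
  define Y where "Y = b*P2"
  have D0: "D > 0" using D_pos D_def by simp
  have pos: "a/y + b > 0" using ab y by (simp add: add_pos_pos)
  \<comment> \<open>Cauchy--Schwarz with weights a y and b\<close>
  have "(a*y*b1^2 + b*b2^2)*(a/y + b) - (a*b1 + b*b2)^2 = a*b*(y*b1 - b2)^2/y"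
    using y by (simp add: field_simps power2_eq_square)
  moreover have "a*b*(y*b1 - b2)^2/y \<ge> 0" using ab y by simp
  moreover have "a*y*b1^2 + b*b2^2 \<le> y*X + Y"
    unfolding X_def Y_def using ab y P by (intro add_mono) (auto simp: mult_left_mono)
  then have "(a*y*b1^2 + b*b2^2)*(a/y + b) \<le> (y*X + Y)*(a/y + b)"
    using pos by (intro mult_right_mono) auto
  ultimately have cs: "(a*b1 + b*b2)^2 \<le> (y*X + Y)*(a/y + b)" by linarith
  have "D*(y*X + Y) = D*(X + Y) - (1-y)*X*D" by (simp add: algebra_simps)
  also have "\<dots> \<le> D*(X + Y) - (1-y)*(2*a)*D"
    using unbound ab y D0 unfolding X_def by (simp add: mult_right_mono mult_left_mono)
  also have "\<dots> = (1 - (X+Y)/2)*((X+Y) - 2*(1-y)*a)"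
    unfolding D_def X_def Y_def by (simp add: field_simps)
  also have "\<dots> \<le> (b + y*a)^2/2"
  proof -
    define T c where "T = X + Y" and "c = 2*(1-y)*a"
    have two_minus_c: "2 - c = 2*(b + y*a)" unfolding c_def using ab by (simp add: algebra_simps)
    have "(2 - c)^2 = 4*(b + y*a)^2" unfolding two_minus_c by (simp only: power_mult_distrib) simp
    moreover have "4*((2 - T)*(T - c)) \<le> (2 - c)^2"
      using sum_squares_ge_zero[of "(2 - T) - (T - c)" 0] by (simp add: algebra_simps power2_eq_square)
    ultimately have "(2 - T)*(T - c)/2 \<le> (b + y*a)^2/2" by simp
    moreover have "(1 - T/2)*(T - c) = (2 - T)*(T - c)/2" by (simp add: field_simps)
    ultimately have "(1 - T/2)*(T - c) \<le> (b + y*a)^2/2" by linarith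
    then show ?thesis unfolding T_def c_def .
  qed
  finally have k: "D*(y*X + Y) \<le> (b + y*a)^2/2" .
  have "D*(a*b1 + b*b2)^2 \<le> (D*(y*X + Y))*(a/y + b)"
    using mult_left_mono[OF cs] D0 by (simp add: mult.assoc)
  also have "\<dots> \<le> (b + y*a)^2/2*(a/y + b)" using pos by (intro mult_right_mono[OF k]) simp
  finally show ?thesis unfolding D_def escape_bound_def by (simp add: mult.commute)
qed

lemma product_le_near_escape:
  fixes a b y \<eta> P1 P2 b1 b2 :: real
  assumes ab: "a > 0" "b > 0" "a + b = 1" and y: "0 < y" "y \<le> 1"
    and P: "b1^2 \<le> P1" "b2^2 \<le> P2" and \<eta>: "\<eta> \<ge> 0" "2 - 2*\<eta> \<le> P1"
    and bound: "a*P1 + b*P2 \<le> 2"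
  shows "(1 - (a*P1 + b*P2)/2) * (a*b1 + b*b2)^2 \<le> escape_bound a b y + 2*\<eta>"
proof -
  define D where "D = 1 - (a*P1 + b*P2)/2"
  define M where "M = a*b1 + b*b2"
  define D' where "D' = 1 - (a*max P1 2 + b*P2)/2"
  have M2: "M^2 \<le> 2" using weighted_sq_le[of a b b1 P1 b2 P2] ab P bound unfolding M_def by simp
  have D0: "D \<ge> 0" using bound unfolding D_def by simp
  have "D - D' = a*(max P1 2 - P1)/2" unfolding D_def D'_def by (simp add: field_simps)
  moreover have "a*(max P1 2 - P1) \<le> 1*(2*\<eta>)" using ab \<eta> by (intro mult_mono) auto
  moreover have "a*(max P1 2 - P1) \<ge> 0" using ab by simp
  ultimately have DD': "0 \<le> D - D'" "D - D' \<le> \<eta>" by auto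
  show ?thesis
  proof (cases "D' > 0")
    case True
    have "D'*M^2 \<le> escape_bound a b y" unfolding D'_def M_def
      by (rule escape_product_le[OF ab y]) (use P True in \<open>auto simp: D'_def\<close>)
    moreover have "(D - D')*M^2 \<le> \<eta>*2" using DD' M2 by (intro mult_mono) auto
    moreover have "D*M^2 = D'*M^2 + (D - D')*M^2" by (simp add: algebra_simps)
    ultimately show ?thesis unfolding D_def M_def by linarith
  next
    case False
    then have "D*M^2 \<le> \<eta>*2" using DD' M2 D0 by (intro mult_mono) auto
    then show ?thesis using escape_bound_nonneg[of a b y] ab y unfolding D_def M_def by simp
  qed
qed

lemma product_le_near_radial:
  fixes a b \<zeta> P1 P2 b1 b2 :: real
  assumes ab: "a > 0" "b > 0" "a + b = 1" and P: "b1^2 \<le> P1" "b2^2 \<le> P2"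
    and bound: "a*P1 + b*P2 < 2" and small: "\<bar>b1\<bar> \<le> \<zeta>" "\<zeta> \<le> 1"
  shows "(1 - (a*P1 + b*P2)/2) * (a*b1 + b*b2)^2 \<le> b/2 + 5*\<zeta>"
proof -
  define D where "D = 1 - (a*P1 + b*P2)/2"
  have P_nonneg: "P1 \<ge> 0" "P2 \<ge> 0" using P order_trans[OF zero_le_power2] by blast+
  have D0: "D > 0" using bound unfolding D_def by simp
  have D1: "D \<le> 1" using ab P_nonneg unfolding D_def by simp
  have "(b*b2)^2 = b*(b*b2^2)" by (simp add: power2_eq_square)
  also have "\<dots> \<le> 1*(b*P2)" using ab P by (intro mult_mono) (auto intro: mult_left_mono)
  also have "\<dots> \<le> 2^2" using bound mult_nonneg_nonneg[OF _ P_nonneg(1), of a] ab by simp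
  finally have bb2: "\<bar>b*b2\<bar> \<le> 2" by (metis abs_le_square_iff abs_numeral)
  have rad: "D*(b*b2)^2 \<le> b/2"
    unfolding D_def by (rule radial_product_le) (use ab P P_nonneg D0 in \<open>auto simp: D_def\<close>)
  have "\<bar>a*b1\<bar> \<le> \<bar>b1\<bar>" using ab by (simp add: abs_mult mult_left_le_one_le)
  then have "\<bar>a*b1 + 2*(b*b2)\<bar> \<le> \<zeta> + 4" using bb2 small by (simp add: abs_triangle_ineq order_trans)
  then have "(D*a)*(\<bar>b1\<bar>*\<bar>a*b1 + 2*(b*b2)\<bar>) \<le> 1*(\<zeta>*(\<zeta>+4))"
    using D0 D1 ab small by (intro mult_mono) (auto simp: mult_le_one)
  moreover have "D*(a*b1 + b*b2)^2 - D*(b*b2)^2 \<le> (D*a)*(\<bar>b1\<bar>*\<bar>a*b1 + 2*(b*b2)\<bar>)"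
  proof -
    have "D*(a*b1 + b*b2)^2 - D*(b*b2)^2 = D*a*b1*(a*b1 + 2*(b*b2))"
      by (simp add: algebra_simps power2_eq_square)
    also have "\<dots> \<le> \<bar>D*a*b1*(a*b1 + 2*(b*b2))\<bar>" by simp
    finally show ?thesis using D0 ab by (simp add: abs_mult)
  qed
  moreover have "\<zeta>*\<zeta> \<le> \<zeta>" using small by (simp add: mult_left_le_one_le)
  then have "\<zeta>*(\<zeta>+4) \<le> 5*\<zeta>" by (simp add: algebra_simps)
  ultimately show ?thesis using rad unfolding D_def by linarith
qed

lemma binding_of_product_ge:
  fixes a b S g y P1 P2 b1 b2 :: real
  assumes ab: "a > 0" "b > 0" "a + b = 1" and y: "0 < y" "y \<le> 1" and g: "g > 0"
    and S: "b/2 \<le> S" "escape_bound a b y \<le> S"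
    and P: "b1^2 \<le> P1" "b2^2 \<le> P2"
    and big: "S + g \<le> (1 - (a*P1 + b*P2)/2) * (a*b1 + b*b2)^2"
  shows "(P1/2 - 1)*b1^2 \<le> - binding_margin g"
proof (rule ccontr)
  define \<eta> where "\<eta> = g/4"
  define \<zeta> where "\<zeta> = min 1 (g/10)"
  assume "\<not> ?thesis"
  then have neg: "-(\<eta>*\<zeta>^2) < (P1/2 - 1)*b1^2" unfolding \<eta>_def \<zeta>_def binding_margin_def by simp
  have S0: "S \<ge> 0" using S ab by simp
  have bound: "a*P1 + b*P2 < 2"
  proof (rule ccontr)
    assume "\<not> ?thesis"
    then have "(1 - (a*P1 + b*P2)/2) * (a*b1 + b*b2)^2 \<le> 0" by (simp add: mult_nonpos_nonneg)
    then show False using big S0 g by linarith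
  qed
  consider "2 - 2*\<eta> \<le> P1" | "P1 < 2 - 2*\<eta>" by linarith
  then show False
  proof cases
    case 1
    have "(1 - (a*P1 + b*P2)/2) * (a*b1 + b*b2)^2 \<le> escape_bound a b y + 2*\<eta>"
      by (rule product_le_near_escape[OF ab y P _ 1]) (use g bound in \<open>auto simp: \<eta>_def\<close>)
    then show False using big S g unfolding \<eta>_def by linarith
  next
    case 2
    then have "(P1/2 - 1)*b1^2 \<le> -\<eta>*b1^2" by (intro mult_right_mono) auto
    then have "\<eta>*b1^2 < \<eta>*\<zeta>^2" using neg by linarith
    then have "b1^2 < \<zeta>^2" using g unfolding \<eta>_def by simp
    then have "\<bar>b1\<bar> \<le> \<zeta>" using power2_less_imp_less[of "\<bar>b1\<bar>" \<zeta>] g unfolding \<zeta>_def by simp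
    moreover have "\<zeta> \<le> 1" unfolding \<zeta>_def by simp
    ultimately have "S + g \<le> b/2 + 5*\<zeta>"
      using product_le_near_radial[OF ab P bound] big by (meson order_trans)
    then show False using S g unfolding \<zeta>_def by linarith
  qed
qed

lemma escape_bound_swap_le:
  fixes a b y :: real
  assumes "0 \<le> a" "a \<le> b" "0 < y" "y \<le> 1"
  shows "escape_bound b a y \<le> escape_bound a b y"
proof -
  have "(a + b*y)*(b + a*y)^2 - (b + a*y)*(a + b*y)^2 = (a + b*y)*(b + a*y)*((b - a)*(1 - y))"
    by (simp add: algebra_simps power2_eq_square)
  moreover have "(a + b*y)*(b + a*y)*((b - a)*(1 - y)) \<ge> 0"
    using assms by (intro mult_nonneg_nonneg) auto
  ultimately have "(b + a*y)*(a + b*y)^2 \<le> (a + b*y)*(b + a*y)^2" by linarith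
  then show ?thesis using assms by (simp add: escape_bound_alt divide_right_mono)
qed

lemma half_le_escape_bound:
  fixes a b y :: real
  assumes "0 \<le> a" "a \<le> 1/2" "a + b = 1" "0 < y" "y \<le> 1"
  shows "b/2 \<le> escape_bound a b y"
proof -
  define z where "z = 1 - y"
  have b: "b = 1 - a" using assms(3) by simp
  define Q where "Q = y*(2*y - 1 + a*z^2) + z*(1 - a*z)^2"
  have eq: "(a + b*y)*(b + a*y)^2 - b*y = a*Q"
    unfolding Q_def z_def b by (simp add: algebra_simps power2_eq_square)
  have "Q \<ge> 0"
  proof (cases "y \<ge> 1/2")
    case True
    then show ?thesis using assms unfolding Q_def z_def by (intro add_nonneg_nonneg mult_nonneg_nonneg) auto
  next
    case False
    have "y*(2*y - 1) \<ge> -1/8" using sum_squares_ge_zero[of "y - 1/4" 0]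
      by (simp add: algebra_simps power2_eq_square)
    moreover have "y*(a*z^2) \<ge> 0" using assms by simp
    moreover have z: "1/2 \<le> z" "z \<le> 1" unfolding z_def using False assms by auto
    then have "a*z \<le> 1/2" using mult_mono[of a "1/2" z 1] assms by simp
    then have "(1/2)^2 \<le> (1 - a*z)^2" by (intro power_mono) auto
    then have "(1/2)*(1/2)^2 \<le> z*(1 - a*z)^2" using z by (intro mult_mono) auto
    moreover have "y*(2*y - 1 + a*z^2) = y*(2*y - 1) + y*(a*z^2)" by (simp add: algebra_simps)
    ultimately show ?thesis unfolding Q_def by (simp add: power2_eq_square)
  qed
  then have "b*y \<le> (a + b*y)*(b + a*y)^2" using eq mult_nonneg_nonneg[OF assms(1)] by fastforce
  then show ?thesis using assms by (simp add: escape_bound_alt pos_le_divide_eq mult.commute)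
qed

text \<open>The number e of the statement is the positive root of 2e^2 + q^2 e = q^2, and
  y = e/q is the weight at which the escape bound attains -\<sigma>.\<close>

lemma sigma_eq_escape_bound:
  fixes mu1 mu2 :: real
  assumes m: "mu1 > 0" "mu2 > 0"
  defines "q \<equiv> mu1 / mu2"
  defines "e \<equiv> (sqrt (q^4 + 8*q^2) - q^2) / 4"
  shows "\<exists>y. 0 < y \<and> y \<le> 1 \<and>
    escape_bound mu1 mu2 y = (1 - e^2) * (mu1^2 + mu2^2*e)^2 / (2*mu2*e^2)"
proof -
  have q0: "q > 0" unfolding q_def using m by simp
  define R where "R = sqrt (q^4 + 8*q^2)"
  have R2: "R^2 = q^4 + 8*q^2" unfolding R_def by simp
  have "(q^2)^2 < R^2" using R2 q0 by (simp flip: power_mult)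
  then have "q^2 < R" using power2_less_imp_less[of "q^2" R] unfolding R_def by simp
  then have e0: "e > 0" unfolding e_def R_def[symmetric] by simp
  have "4*e + q^2 = R" unfolding e_def R_def by (simp add: field_simps)
  then have "(4*e + q^2)^2 = q^4 + 8*q^2" using R2 by simp
  then have root: "2*e^2 + e*q^2 = q^2" by (simp add: algebra_simps power2_eq_square power4_eq_xxxx)
  define y where "y = e/q"
  have y0: "y > 0" unfolding y_def using e0 q0 by simp
  have "q^2*(2*y^2 + q*y) = q^2*1"
    using root q0 unfolding y_def by (simp add: field_simps power2_eq_square)
  then have root_y: "2*y^2 + q*y = 1" using q0 by simp
  have y1: "y \<le> 1"
  proof (rule ccontr)
    assume "\<not> y \<le> 1"
    then have "y^2 > 1" by simp
    moreover have "q*y > 0" using q0 y0 by simp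
    ultimately show False using root_y by linarith
  qed
  have mu1: "mu1 = q*mu2" unfolding q_def using m by simp
  have key: "(q^2 + e)*(1 + e)^2*e = (1 - e^2)*(q^2 + e)^2"
  proof -
    have k: "(1 + e)*e = (1 - e)*(q^2 + e)" using root by (simp add: algebra_simps power2_eq_square)
    have "(q^2 + e)*(1 + e)^2*e = (q^2 + e)*(1 + e)*((1 + e)*e)" by (simp add: power2_eq_square algebra_simps)
    also have "\<dots> = (1 - e^2)*(q^2 + e)^2" unfolding k by (simp add: power2_eq_square algebra_simps)
    finally show ?thesis .
  qed
  have "escape_bound mu1 mu2 y = mu2^3*((q^2 + e)*(1 + e)^2*e)/(2*e^2)"
    unfolding escape_bound_def mu1 y_def using q0 e0 m
    by (simp add: field_simps power2_eq_square power3_eq_cube)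
  also have "\<dots> = (1 - e^2) * (mu1^2 + mu2^2*e)^2 / (2*mu2*e^2)"
    unfolding key mu1 using m e0 by (simp add: field_simps power2_eq_square power3_eq_cube)
  finally show ?thesis using y0 y1 by blast
qed

lemma sigma_dominates_bounds:
  fixes mu1 mu2 :: real
  assumes m: "mu1 > 0" "mu2 > 0" "mu1 + mu2 = 1" "mu1 \<le> mu2"
  defines "e \<equiv> (sqrt ((mu1/mu2)^4 + 8*(mu1/mu2)^2) - (mu1/mu2)^2) / 4"
  defines "S \<equiv> (1 - e^2) * (mu1^2 + mu2^2*e)^2 / (2*mu2*e^2)"
  shows "\<exists>y. 0 < y \<and> y \<le> 1 \<and> mu1/2 \<le> S \<and> mu2/2 \<le> S \<and>
    escape_bound mu1 mu2 y \<le> S \<and> escape_bound mu2 mu1 y \<le> S"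
proof -
  obtain y where y: "0 < y" "y \<le> 1" and S_eq: "escape_bound mu1 mu2 y = S"
    using sigma_eq_escape_bound[OF m(1,2)] unfolding S_def e_def by blast
  have "mu2/2 \<le> S" "escape_bound mu2 mu1 y \<le> S"
    using half_le_escape_bound[of mu1 mu2 y] escape_bound_swap_le[of mu1 mu2 y] m y S_eq
    by simp_all
  then show ?thesis using m(4) y S_eq by (intro exI[of _ y]) auto
qed

lemma kep_angmom_sq_le: "(kep_angmom x v)^2 \<le> (norm x)^2 * (norm v)^2"
proof -
  have norm_sq: "(norm u)^2 = u$1^2 + u$2^2" for u :: "real^2"
    unfolding power2_norm_eq_inner by (simp add: inner_vec_def sum_2 power2_eq_square)
  have "(norm x)^2 * (norm v)^2 - (kep_angmom x v)^2 = (x$1 * v$1 + x$2 * v$2)^2"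
    unfolding norm_sq kep_angmom_def by (simp add: algebra_simps power2_eq_square)
  then show ?thesis by (metis diff_ge_0_iff_ge zero_le_power2)
qed

lemma kep_angmom_add: "kep_angmom x (u + w) = kep_angmom x u + kep_angmom x w"
  and kep_angmom_diff: "kep_angmom x (u - w) = kep_angmom x u - kep_angmom x w"
  and kep_angmom_scaleR: "kep_angmom x (c *\<^sub>R u) = c * kep_angmom x u"
  by (simp_all add: kep_angmom_def algebra_simps)

lemma kep_energy_ge: "kep_energy x v \<ge> -1 / norm x"
  by (simp add: kep_energy_def)

lemma kep_angmom_sq_le_of_energy_neg:
  assumes "x \<noteq> 0" "kep_energy x v < 0"
  shows "(kep_angmom x v)^2 \<le> 2 * norm x"
proof -
  have r0: "norm x > 0" using assms by simp
  have "(norm v)^2 < 2 / norm x" using assms(2) unfolding kep_energy_def by simp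
  then have "(norm x)^2 * (norm v)^2 \<le> (norm x)^2 * (2 / norm x)" using r0 by (intro mult_left_mono) auto
  also have "\<dots> = 2 * norm x" using r0 by (simp add: power2_eq_square)
  finally show ?thesis using kep_angmom_sq_le[of x v] by linarith
qed

lemma kep_bounds_of_binding:
  assumes "x \<noteq> 0" "\<delta> > 0" "kep_energy x v * (kep_angmom x v)^2 \<le> -\<delta>" "norm x \<le> R"
  shows "kep_energy x v < 0 \<and> \<bar>kep_angmom x v\<bar> \<le> sqrt (2*R) \<and> kep_ecc x v \<le> sqrt (1 - 2*\<delta>)"
proof (intro conjI)
  show E: "kep_energy x v < 0"
  proof (rule ccontr)
    assume "\<not> kep_energy x v < 0"
    then have "kep_energy x v * (kep_angmom x v)^2 \<ge> 0" by simp
    then show False using assms(2,3) by linarith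
  qed
  have "(kep_angmom x v)^2 \<le> 2*R" using kep_angmom_sq_le_of_energy_neg[OF assms(1) E] assms(4) by linarith
  then show "\<bar>kep_angmom x v\<bar> \<le> sqrt (2*R)" using real_sqrt_le_mono by fastforce
  show "kep_ecc x v \<le> sqrt (1 - 2*\<delta>)"
    unfolding kep_ecc_def using assms(3) by (intro real_sqrt_le_mono) linarith
qed

lemma norm_le_of_weighted_energy:
  fixes mu1 mu2 s L :: real
  assumes m: "mu1 \<ge> 0" "mu2 \<ge> 0" "mu1 + mu2 = 1" and x: "x \<noteq> 0" and s: "s > 0"
    and big: "(mu1 * kep_energy x v1 + mu2 * kep_energy x v2) * L^2 \<le> -s"
  shows "norm x \<le> L^2 / s"
proof -
  have "-1/norm x = mu1 * (-1/norm x) + mu2 * (-1/norm x)"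
    using m(3) by (metis distrib_right mult_1)
  also have "\<dots> \<le> mu1 * kep_energy x v1 + mu2 * kep_energy x v2"
    using m kep_energy_ge by (intro add_mono mult_left_mono) auto
  finally have "(-1/norm x) * L^2 \<le> (mu1 * kep_energy x v1 + mu2 * kep_energy x v2) * L^2"
    by (intro mult_right_mono) auto
  then have "s \<le> L^2 / norm x" using big by simp
  then show ?thesis using s x by (simp add: le_divide_eq mult.commute)
qed

lemma kep_scaled:
  assumes "x \<noteq> 0"
  defines "r \<equiv> norm x"
  shows "kep_energy x v = ((norm v)^2 * r / 2 - 1) / r"
    and "(kep_angmom x v / sqrt r)^2 \<le> (norm v)^2 * r"
proof -
  have r0: "r > 0" unfolding r_def using assms by simp
  show "kep_energy x v = ((norm v)^2 * r / 2 - 1) / r"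
    unfolding kep_energy_def r_def using assms by (simp add: field_simps)
  have "(kep_angmom x v / sqrt r)^2 = (kep_angmom x v)^2 / r" using r0 by (simp add: power_divide)
  also have "\<dots> \<le> r^2 * (norm v)^2 / r"
    using kep_angmom_sq_le[of x v] r0 unfolding r_def by (simp add: divide_right_mono)
  also have "\<dots> = (norm v)^2 * r" using r0 by (simp add: power2_eq_square)
  finally show "(kep_angmom x v / sqrt r)^2 \<le> (norm v)^2 * r" .
qed

lemma kep_binding_of_weighted:
  fixes mu1 mu2 S g y :: real and x v1 v2 :: "real^2"
  assumes m: "mu1 > 0" "mu2 > 0" "mu1 + mu2 = 1" and y: "0 < y" "y \<le> 1" and g: "g > 0"
    and S: "mu2/2 \<le> S" "escape_bound mu1 mu2 y \<le> S" and x: "x \<noteq> 0"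
    and big: "(mu1 * kep_energy x v1 + mu2 * kep_energy x v2)
                * (mu1 * kep_angmom x v1 + mu2 * kep_angmom x v2)^2 \<le> -(S + g)"
  shows "kep_energy x v1 * (kep_angmom x v1)^2 \<le> - binding_margin g"
proof -
  define r where "r = norm x"
  have r0: "r > 0" unfolding r_def using x by simp
  have sr2: "(sqrt r)^2 = r" using r0 by simp
  define P1 P2 where "P1 = (norm v1)^2 * r" and "P2 = (norm v2)^2 * r"
  define b1 b2 where "b1 = kep_angmom x v1 / sqrt r" and "b2 = kep_angmom x v2 / sqrt r"
  note sc1 = kep_scaled[OF x, of v1, folded r_def, folded b1_def]
  note sc2 = kep_scaled[OF x, of v2, folded r_def, folded b2_def]
  have bP1: "b1^2 \<le> P1" and bP2: "b2^2 \<le> P2" using sc1(2) sc2(2) unfolding P1_def P2_def .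
  have L1: "kep_angmom x v1 = sqrt r * b1" and L2: "kep_angmom x v2 = sqrt r * b2"
    unfolding b1_def b2_def using r0 by simp_all
  define D M where "D = 1 - (mu1*P1 + mu2*P2)/2" and "M = mu1*b1 + mu2*b2"
  have "mu1 * kep_energy x v1 + mu2 * kep_energy x v2 = -D / r"
    using m(3) r0 unfolding sc1(1) sc2(1) P1_def P2_def D_def
    by (simp add: field_simps) (simp flip: distrib_right)
  moreover have "(mu1 * kep_angmom x v1 + mu2 * kep_angmom x v2)^2 = (sqrt r * M)^2"
    unfolding L1 L2 M_def by (simp add: algebra_simps)
  moreover have "\<dots> = r * M^2" by (simp only: power_mult_distrib sr2)
  ultimately have "S + g \<le> D * M^2" using big r0 by simp
  then have "(P1/2 - 1)*b1^2 \<le> - binding_margin g"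
    unfolding D_def M_def by (rule binding_of_product_ge[OF m y g S bP1 bP2])
  moreover have "kep_energy x v1 * (kep_angmom x v1)^2 = (P1/2 - 1)*b1^2"
    unfolding sc1(1) L1 P1_def using r0 by (simp add: power_mult_distrib sr2)
  ultimately show ?thesis by simp
qed

lemma norm_collision_le:
  fixes w n :: "'a::real_inner"
  assumes "norm n = 1" "0 \<le> eps" "eps \<le> 1/2"
  shows "norm ((w - (n \<bullet> w) *\<^sub>R n) - (1 - 2*eps) *\<^sub>R ((n \<bullet> w) *\<^sub>R n)) \<le> norm w"
proof -
  define k where "k = 2 - 2*eps"
  have nn: "n \<bullet> n = 1" using assms(1) by (simp add: norm_eq_1)
  have eq: "(w - (n \<bullet> w) *\<^sub>R n) - (1 - 2*eps) *\<^sub>R ((n \<bullet> w) *\<^sub>R n) = w - (k * (n \<bullet> w)) *\<^sub>R n"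
    unfolding k_def by (simp add: algebra_simps) (metis mult_2_right scaleR_add_left)
  have "(norm (w - (k * (n \<bullet> w)) *\<^sub>R n))^2 = (norm w)^2 - k*(2 - k)*(n \<bullet> w)^2"
    unfolding power2_norm_eq_inner by (simp add: inner_commute nn algebra_simps power2_eq_square)
  moreover have "k*(2 - k) \<ge> 0" unfolding k_def using assms by simp
  ultimately have "(norm (w - (k * (n \<bullet> w)) *\<^sub>R n))^2 \<le> (norm w)^2" by simp
  then show ?thesis unfolding eq using power2_le_imp_le norm_ge_zero by blast
qed

lemma weighted_norm_sq_split:
  fixes V w :: "'a::real_inner"
  assumes "m1 + m2 = 1"
  shows "m1 * (norm (V + m2 *\<^sub>R w))^2 + m2 * (norm (V - m1 *\<^sub>R w))^2
    = (norm V)^2 + m1 * m2 * (norm w)^2"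
proof -
  have m1: "m1 = 1 - m2" using assms by simp
  show ?thesis unfolding power2_norm_eq_inner m1
    by (simp add: inner_commute algebra_simps)
qed

lemma collision_weighted_angmom_energy:
  fixes m1 m2 eps :: real and x v1 v2 n :: "real^2"
  assumes m: "m1 + m2 = 1" "m1 \<ge> 0" "m2 \<ge> 0" and eps: "0 \<le> eps" "eps \<le> 1/2" and n: "norm n = 1"
  defines "w \<equiv> v1 - v2"
  defines "w' \<equiv> (w - (n \<bullet> w) *\<^sub>R n) - (1 - 2*eps) *\<^sub>R ((n \<bullet> w) *\<^sub>R n)"
  defines "V \<equiv> m1 *\<^sub>R v1 + m2 *\<^sub>R v2"
  shows "m1 * kep_angmom x (V + m2 *\<^sub>R w') + m2 * kep_angmom x (V - m1 *\<^sub>R w')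
          = m1 * kep_angmom x v1 + m2 * kep_angmom x v2"
    and "m1 * kep_energy x (V + m2 *\<^sub>R w') + m2 * kep_energy x (V - m1 *\<^sub>R w')
          \<le> m1 * kep_energy x v1 + m2 * kep_energy x v2"
proof -
  have m1: "m1 = 1 - m2" using m by simp
  show "m1 * kep_angmom x (V + m2 *\<^sub>R w') + m2 * kep_angmom x (V - m1 *\<^sub>R w')
          = m1 * kep_angmom x v1 + m2 * kep_angmom x v2"
    unfolding V_def kep_angmom_add kep_angmom_diff kep_angmom_scaleR m1 by (simp add: algebra_simps)
  have energy: "m1 * kep_energy x u1 + m2 * kep_energy x u2
      = (m1 * (norm u1)^2 + m2 * (norm u2)^2)/2 - 1/norm x" for u1 u2
  proof -
    have "m1 * kep_energy x u1 + m2 * kep_energy x u2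
        = (m1 * (norm u1)^2 + m2 * (norm u2)^2)/2 - (m1 + m2) * (1/norm x)"
      unfolding kep_energy_def by (simp add: right_diff_distrib distrib_right add_divide_distrib)
    then show ?thesis using m(1) by simp
  qed
  have "v1 = V + m2 *\<^sub>R w" "v2 = V - m1 *\<^sub>R w" unfolding V_def w_def m1 by (simp_all add: algebra_simps)
  then have "m1 * (norm v1)^2 + m2 * (norm v2)^2 = (norm V)^2 + m1 * m2 * (norm w)^2"
    using weighted_norm_sq_split[OF m(1)] by simp
  moreover have "m1 * m2 * (norm w')^2 \<le> m1 * m2 * (norm w)^2"
    unfolding w'_def using norm_collision_le[OF n eps] m by (intro mult_left_mono power_mono) auto
  ultimately show "m1 * kep_energy x (V + m2 *\<^sub>R w') + m2 * kep_energy x (V - m1 *\<^sub>R w')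
          \<le> m1 * kep_energy x v1 + m2 * kep_energy x v2"
    unfolding energy weighted_norm_sq_split[OF m(1)] by simp
qed

lemma kep_orbit_memD:
  assumes "(p, w) \<in> kep_orbit x v"
  shows "kep_orbit p w = kep_orbit x v" "p \<noteq> 0"
    "kep_energy p w = kep_energy x v" "kep_angmom p w = kep_angmom x v"
  using assms unfolding kep_orbit_def by auto

text \<open>A pair of orbits is stored through a common point x; the weighted energy and
  angular momentum do not depend on that choice, being constants of the orbits.\<close>

definition orb_invariant :: "real \<Rightarrow> real \<Rightarrow> real \<Rightarrow> real \<Rightarrow>
    (((real^2) \<times> (real^2)) set \<times> ((real^2) \<times> (real^2)) set) \<Rightarrow> bool" where
  "orb_invariant mu1 mu2 L s T \<longleftrightarrow> (\<exists>x u1 u2. x \<noteq> 0 \<and> T = (kep_orbit x u1, kep_orbit x u2) \<and>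
      mu1 * kep_angmom x u1 + mu2 * kep_angmom x u2 = L \<and>
      (mu1 * kep_energy x u1 + mu2 * kep_energy x u2) * L^2 \<le> s)"

lemma orb_invariant_init:
  fixes mu1 mu2 :: real
  assumes "(p, w1) \<in> kep_orbit x1 v1" "(p, w2) \<in> kep_orbit x2 v2"
  defines "L \<equiv> mu1 * kep_angmom x1 v1 + mu2 * kep_angmom x2 v2"
  shows "orb_invariant mu1 mu2 L ((mu1 * kep_energy x1 v1 + mu2 * kep_energy x2 v2) * L^2)
    (kep_orbit x1 v1, kep_orbit x2 v2)"
  unfolding orb_invariant_def
  by (rule exI[of _ p], rule exI[of _ w1], rule exI[of _ w2])
    (simp add: kep_orbit_memD[OF assms(1)] kep_orbit_memD[OF assms(2)] L_def)

lemma orb_step_invariant: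
  fixes mu1 mu2 eps L s :: real
  assumes m: "mu1 + mu2 = 1" "mu1 \<ge> 0" "mu2 \<ge> 0" and eps: "0 \<le> eps" "eps \<le> 1/2"
    and inv: "orb_invariant mu1 mu2 L s T" and step: "orb_step mu1 mu2 eps T T'"
  shows "orb_invariant mu1 mu2 L s T'"
proof -
  from inv obtain x u1 u2 where T: "T = (kep_orbit x u1, kep_orbit x u2)"
    and L: "mu1 * kep_angmom x u1 + mu2 * kep_angmom x u2 = L"
    and E: "(mu1 * kep_energy x u1 + mu2 * kep_energy x u2) * L^2 \<le> s"
    unfolding orb_invariant_def by blast
  from step obtain z a1 a2 n where z: "(z, a1) \<in> fst T" "(z, a2) \<in> snd T" and n: "norm n = 1"
    and T': "let w = a1 - a2;
           w' = (w - (n \<bullet> w) *\<^sub>R n) - (1 - 2 * eps) *\<^sub>R ((n \<bullet> w) *\<^sub>R n);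
           v = mu1 *\<^sub>R a1 + mu2 *\<^sub>R a2
       in T' = (kep_orbit z (v + mu2 *\<^sub>R w'), kep_orbit z (v - mu1 *\<^sub>R w'))"
    unfolding orb_step_def by (elim exE conjE) (rule that, assumption+)
  note o1 = kep_orbit_memD[of z a1 x u1] and o2 = kep_orbit_memD[of z a2 x u2]
  define w where "w = a1 - a2"
  define w' where "w' = (w - (n \<bullet> w) *\<^sub>R n) - (1 - 2*eps) *\<^sub>R ((n \<bullet> w) *\<^sub>R n)"
  define V where "V = mu1 *\<^sub>R a1 + mu2 *\<^sub>R a2"
  have T'_eq: "T' = (kep_orbit z (V + mu2 *\<^sub>R w'), kep_orbit z (V - mu1 *\<^sub>R w'))"
    using T' unfolding Let_def w_def w'_def V_def by simp
  note c = collision_weighted_angmom_energy[OF m eps n, of z a1 a2, folded w_def, folded w'_def V_def]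
  have L': "mu1 * kep_angmom z (V + mu2 *\<^sub>R w') + mu2 * kep_angmom z (V - mu1 *\<^sub>R w') = L"
    using c(1) o1 o2 z L T by simp
  have "(mu1 * kep_energy z (V + mu2 *\<^sub>R w') + mu2 * kep_energy z (V - mu1 *\<^sub>R w')) * L^2
      \<le> (mu1 * kep_energy x u1 + mu2 * kep_energy x u2) * L^2"
    using c(2) o1 o2 z T by (intro mult_right_mono) auto
  then show ?thesis unfolding orb_invariant_def using o1(2) z T T'_eq L' E by fastforce
qed

lemma rtranclp_orb_step_invariant:
  fixes mu1 mu2 eps L s :: real
  assumes m: "mu1 + mu2 = 1" "mu1 \<ge> 0" "mu2 \<ge> 0" and eps: "0 \<le> eps" "eps \<le> 1/2"
    and "(orb_step mu1 mu2 eps)\<^sup>*\<^sup>* T0 T" "orb_invariant mu1 mu2 L s T0"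
  shows "orb_invariant mu1 mu2 L s T"
  using assms(6,7) by induction (auto intro: orb_step_invariant[OF m eps])

lemma orb_invariant_bounds:
  fixes mu1 mu2 S g y L :: real
  assumes m: "mu1 > 0" "mu2 > 0" "mu1 + mu2 = 1" and y: "0 < y" "y \<le> 1" and g: "g > 0"
    and S: "mu1/2 \<le> S" "mu2/2 \<le> S" "escape_bound mu1 mu2 y \<le> S" "escape_bound mu2 mu1 y \<le> S"
    and inv: "orb_invariant mu1 mu2 L (-(S + g)) T"
  shows "\<forall>(z, w) \<in> fst T \<union> snd T. kep_energy z w < 0 \<and>
    \<bar>kep_angmom z w\<bar> \<le> sqrt (2 * (L^2 / (S + g))) \<and> kep_ecc z w \<le> sqrt (1 - 2 * binding_margin g)"
proof -
  from inv obtain x u1 u2 where x: "x \<noteq> 0" and T: "T = (kep_orbit x u1, kep_orbit x u2)"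
    and L: "mu1 * kep_angmom x u1 + mu2 * kep_angmom x u2 = L"
    and E: "(mu1 * kep_energy x u1 + mu2 * kep_energy x u2) * L^2 \<le> -(S + g)"
    unfolding orb_invariant_def by blast
  have R: "norm x \<le> L^2 / (S + g)"
    using norm_le_of_weighted_energy[OF _ _ m(3) x _ E] m S g by simp
  have "kep_energy x u1 * (kep_angmom x u1)^2 \<le> - binding_margin g"
    using kep_binding_of_weighted[OF m y g S(2,3) x, of u1 u2] E L by simp
  note bound1 = kep_bounds_of_binding[OF x binding_margin_pos[OF g] this R]
  have "kep_energy x u2 * (kep_angmom x u2)^2 \<le> - binding_margin g"
    using kep_binding_of_weighted[of mu2 mu1 y g S x u2 u1] m y g S x E L by (simp add: ac_simps)
  note bound2 = kep_bounds_of_binding[OF x binding_margin_pos[OF g] this R]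
  have "kep_energy z w < 0 \<and> \<bar>kep_angmom z w\<bar> \<le> sqrt (2 * (L^2 / (S + g))) \<and>
      kep_ecc z w \<le> sqrt (1 - 2 * binding_margin g)" if "(z, w) \<in> fst T \<union> snd T" for z w
  proof -
    have "(z, w) \<in> kep_orbit x u1 \<or> (z, w) \<in> kep_orbit x u2" using that T by auto
    then show ?thesis
      using bound1 bound2 kep_orbit_memD[of z w x u1] kep_orbit_memD[of z w x u2]
      unfolding kep_ecc_def by auto
  qed
  then show ?thesis by auto
qed

theorem theorem1:
  fixes mu1 mu2 eps :: real and x1 v1 x2 v2 :: "real^2"
  assumes "mu1 > 0" "mu2 > 0" "mu1 + mu2 = 1" "mu1 \<le> mu2"
    and "0 \<le> eps" "eps \<le> 1/2"
    and "x1 \<noteq> 0" "x2 \<noteq> 0"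
    and "\<exists>p w1 w2. (p, w1) \<in> kep_orbit x1 v1 \<and> (p, w2) \<in> kep_orbit x2 v2"
    and "kep_energy x1 v1 < 0" "kep_energy x2 v2 < 0"
    and "(mu1 * kep_energy x1 v1 + mu2 * kep_energy x2 v2) < 0"
    and "(mu1 * kep_energy x1 v1 + mu2 * kep_energy x2 v2)
           * (mu1 * kep_angmom x1 v1 + mu2 * kep_angmom x2 v2)^2
         < (let q = mu1 / mu2;
                e = (sqrt (q^4 + 8 * q^2) - q^2) / 4
            in - ((1 - e^2) * (mu1^2 + mu2^2 * e)^2) / (2 * mu2 * e^2))"
  shows "\<exists>B c1 c2. c1 < 1 \<and> c2 < 1 \<and>
    (\<forall>O1 O2. (orb_step mu1 mu2 eps)\<^sup>*\<^sup>* (kep_orbit x1 v1, kep_orbit x2 v2) (O1, O2) \<longrightarrow>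
       (\<forall>(y, w) \<in> O1. kep_energy y w < 0 \<and> \<bar>kep_angmom y w\<bar> \<le> B \<and> kep_ecc y w \<le> c1) \<and>
       (\<forall>(y, w) \<in> O2. kep_energy y w < 0 \<and> \<bar>kep_angmom y w\<bar> \<le> B \<and> kep_ecc y w \<le> c2))"
proof -
  define L where "L = mu1 * kep_angmom x1 v1 + mu2 * kep_angmom x2 v2"
  define e where "e = (sqrt ((mu1/mu2)^4 + 8*(mu1/mu2)^2) - (mu1/mu2)^2) / 4"
  define S where "S = (1 - e^2) * (mu1^2 + mu2^2*e)^2 / (2*mu2*e^2)"
  obtain y where y: "0 < y" "y \<le> 1"
    and S: "mu1/2 \<le> S" "mu2/2 \<le> S" "escape_bound mu1 mu2 y \<le> S" "escape_bound mu2 mu1 y \<le> S"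
    using sigma_dominates_bounds[OF assms(1-4)] unfolding S_def e_def by blast
  have sigma: "(let q = mu1 / mu2; e = (sqrt (q^4 + 8 * q^2) - q^2) / 4
         in - ((1 - e^2) * (mu1^2 + mu2^2 * e)^2) / (2 * mu2 * e^2)) = -S"
    unfolding Let_def S_def e_def by (simp only: minus_divide_left)
  define g where "g = -((mu1 * kep_energy x1 v1 + mu2 * kep_energy x2 v2) * L^2) - S"
  have g: "g > 0" using assms(13) unfolding sigma g_def L_def by linarith
  have "orb_invariant mu1 mu2 L (-(S + g)) (kep_orbit x1 v1, kep_orbit x2 v2)"
    using assms(9) orb_invariant_init unfolding g_def L_def by fastforce
  then have inv: "orb_invariant mu1 mu2 L (-(S + g)) T"
    if "(orb_step mu1 mu2 eps)\<^sup>*\<^sup>* (kep_orbit x1 v1, kep_orbit x2 v2) T" for T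
    using rtranclp_orb_step_invariant[OF _ _ _ assms(5,6) that] assms(1-3) by simp
  define B c where "B = sqrt (2 * (L^2 / (S + g)))" and "c = sqrt (1 - 2 * binding_margin g)"
  have "c < 1" unfolding c_def using binding_margin_pos[OF g] by simp
  moreover have "(\<forall>(z, w) \<in> O1. kep_energy z w < 0 \<and> \<bar>kep_angmom z w\<bar> \<le> B \<and> kep_ecc z w \<le> c) \<and>
      (\<forall>(z, w) \<in> O2. kep_energy z w < 0 \<and> \<bar>kep_angmom z w\<bar> \<le> B \<and> kep_ecc z w \<le> c)"
    if "(orb_step mu1 mu2 eps)\<^sup>*\<^sup>* (kep_orbit x1 v1, kep_orbit x2 v2) (O1, O2)" for O1 O2
    using orb_invariant_bounds[OF assms(1-3) y g S inv[OF that]] unfolding B_def c_def by auto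
  ultimately show ?thesis by blast
qed

end
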